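(* Let $\Gamma$ be a countable discrete group and $\mu$ a probability measure on $\Gamma$ whose support generates $\Gamma$ as a semigroup. If $\lambda\in\mathbb T$ is a peripheral eigenvalue of $\mathcal P_\mu$, i.e. there is $0\neq T\in\mathcal B(\ell^2(\Gamma))$ with $\mathcal P_\mu(T)=\lambda T$, then $\lambda^k=1$ for some positive integer $k$.
   Context: $\rho$ denotes the right regular representation of $\Gamma$ on $\ell^2(\Gamma)$, $\rho_g\delta_x=\delta_{xg^{-1}}$. The Markov operator $\mathcal P_\mu:\mathcal B(\ell^2(\Gamma))\to\mathcal B(\ell^2(\Gamma))$ is $\mathcal P_\mu(T)=\sum_{g\in\Gamma}\mu(g)\rho_gT\rho_g^*$. *)

theory Defs
  imports "HOL-Analysis.Analysis"
begin

text \<open>The group \<Gamma> is a type of class group_add (a possibly non-abelian group written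
additively) that is countable.  A bounded operator T on l2(\<Gamma>) is represented by its
matrix t x y = <T delta_y, delta_x>; a kernel t is the matrix of a bounded operator iff its
bilinear form is bounded on finitely supported vectors.\<close>

definition bounded_kernel :: "('g \<Rightarrow> 'g \<Rightarrow> complex) \<Rightarrow> bool" where
  "bounded_kernel t \<longleftrightarrow> (\<exists>C. \<forall>F a b. finite F \<longrightarrow>
     cmod (\<Sum>x\<in>F. \<Sum>y\<in>F. cnj (b x) * t x y * a y)
       \<le> C * sqrt (\<Sum>y\<in>F. (cmod (a y))\<^sup>2) * sqrt (\<Sum>x\<in>F. (cmod (b x))\<^sup>2))"

text \<open>Right regular representation rho_g delta_x = delta_(x g^-1) (here x - g).
The matrix of rho_g T rho_g^* is (x,y) |-> t (x+g) (y+g).\<close>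

definition rho_conj :: "'g::group_add \<Rightarrow> ('g \<Rightarrow> 'g \<Rightarrow> complex) \<Rightarrow> ('g \<Rightarrow> 'g \<Rightarrow> complex)" where
  "rho_conj g t = (\<lambda>x y. t (x + g) (y + g))"

definition markov_op :: "('g::group_add \<Rightarrow> real) \<Rightarrow> ('g \<Rightarrow> 'g \<Rightarrow> complex) \<Rightarrow> ('g \<Rightarrow> 'g \<Rightarrow> complex)" where
  "markov_op \<mu> t = (\<lambda>x y. \<Sum>\<^sub>\<infinity>g. complex_of_real (\<mu> g) * rho_conj g t x y)"

definition is_prob :: "('g \<Rightarrow> real) \<Rightarrow> bool" where
  "is_prob \<mu> \<longleftrightarrow> (\<forall>g. \<mu> g \<ge> 0) \<and> (\<mu> has_sum 1) UNIV"

inductive_set sgrp_gen :: "'g::plus set \<Rightarrow> 'g set" for S where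
  base: "s \<in> S \<Longrightarrow> s \<in> sgrp_gen S"
| add: "a \<in> sgrp_gen S \<Longrightarrow> b \<in> sgrp_gen S \<Longrightarrow> a + b \<in> sgrp_gen S"

end

theory Submission
  imports Defs
begin

text \<open>Fix a nonzero entry of T and follow it along the diagonal translates, h g = t (x0 + g) (y0 + g).
The eigenvalue equation says that \<lambda> h g is the \<mu>-average of the values h (g + s), and h is bounded.
Let M be the supremum of |h|^2 and D g = M - |h g|^2 the defect at g. Since the average of the
|h (g + s) - \<lambda> h g|^2 + D (g + s) equals D g, a single step by s with \<mu> s > 0 enlarges the defect
at most by the factor 1 / \<mu> s and moves h g to \<lambda> h g up to O(sqrt (D g)). Composing such steps along
a word in the support that represents 0 gives |1 - \<lambda>^n| |h g| \<le> K sqrt (D g) for some n > 0 and all g,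
which is impossible unless \<lambda>^n = 1, because D g becomes arbitrarily small where |h g| approaches
its supremum.\<close>

lemma bounded_kernel_entry_bound:
  assumes "bounded_kernel t"
  obtains C where "\<And>x y. cmod (t x y) \<le> C"
proof -
  obtain C where C: "\<And>F a b. finite F \<Longrightarrow>
     cmod (\<Sum>x\<in>F. \<Sum>y\<in>F. cnj (b x) * t x y * a y)
       \<le> C * sqrt (\<Sum>y\<in>F. (cmod (a y))\<^sup>2) * sqrt (\<Sum>x\<in>F. (cmod (b x))\<^sup>2)"
    using assms unfolding bounded_kernel_def by blast
  have "cmod (t x y) \<le> C" for x y
    using C[where F = "{x, y}" and a = "\<lambda>z. if z = y then 1 else 0" and b = "\<lambda>z. if z = x then 1 else 0"]
    by (cases "x = y") (simp_all add: sum.insert)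
  then show thesis by (rule that)
qed

lemma summable_on_prob_weighted_bounded:
  fixes f :: "'a \<Rightarrow> complex"
  assumes "is_prob \<mu>" and "\<And>s. cmod (f s) \<le> B"
  shows "(\<lambda>s. complex_of_real (\<mu> s) * f s) summable_on UNIV"
proof -
  have "(\<lambda>s. \<mu> s * B) summable_on UNIV"
    using assms(1) has_sum_cmult_left summable_on_def unfolding is_prob_def by blast
  moreover have "norm (complex_of_real (\<mu> s) * f s) \<le> \<mu> s * B" for s
    using assms by (simp add: is_prob_def norm_mult mult_left_mono)
  ultimately have "(\<lambda>s. norm (complex_of_real (\<mu> s) * f s)) summable_on UNIV"
    by (intro Infinite_Sum.abs_summable_on_comparison_test') auto
  then show ?thesis by (rule abs_summable_summable)
qed

lemma markov_op_eigen_has_sum: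
  assumes "is_prob \<mu>" and "bounded_kernel t" and "markov_op \<mu> t = (\<lambda>x y. lam * t x y)"
  shows "((\<lambda>s. complex_of_real (\<mu> s) * t (x + s) (y + s)) has_sum lam * t x y) UNIV"
proof -
  obtain C where C: "\<And>x y. cmod (t x y) \<le> C"
    using bounded_kernel_entry_bound[OF assms(2)] by blast
  have "(\<lambda>s. complex_of_real (\<mu> s) * t (x + s) (y + s)) summable_on UNIV"
    by (rule summable_on_prob_weighted_bounded[OF assms(1) C])
  moreover have "(\<Sum>\<^sub>\<infinity>s. complex_of_real (\<mu> s) * t (x + s) (y + s)) = lam * t x y"
    using fun_cong[OF fun_cong[OF assms(3)], of x y] by (simp add: markov_op_def rho_conj_def)
  ultimately show ?thesis by (metis has_sum_infsum)
qed

lemma has_sum_mean_defect: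
  fixes \<mu> :: "'a \<Rightarrow> real" and f :: "'a \<Rightarrow> complex"
  assumes "(\<mu> has_sum 1) UNIV" and "((\<lambda>s. complex_of_real (\<mu> s) * f s) has_sum w) UNIV"
  shows "((\<lambda>s. \<mu> s * ((cmod (f s - w))\<^sup>2 + (M - (cmod (f s))\<^sup>2))) has_sum (M - (cmod w)\<^sup>2)) UNIV"
proof -
  have pointwise: "\<mu> s * ((cmod (f s - w))\<^sup>2 + (M - (cmod (f s))\<^sup>2))
      = \<mu> s * (M + (cmod w)\<^sup>2) + (-2) * Re (cnj w * (complex_of_real (\<mu> s) * f s))" for s
    unfolding cmod_power2 by (simp add: power2_eq_square algebra_simps)
  have mean_Re: "((\<lambda>s. Re (cnj w * (complex_of_real (\<mu> s) * f s))) has_sum (cmod w)\<^sup>2) UNIV"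
    using has_sum_Re[OF has_sum_cmult_right[OF assms(2), of "cnj w"]]
    by (metis Re_complex_of_real complex_norm_square mult.commute)
  have sum_value: "1 * (M + (cmod w)\<^sup>2) + -2 * (cmod w)\<^sup>2 = M - (cmod w)\<^sup>2"
    by simp
  show ?thesis
    unfolding pointwise sum_value[symmetric]
    by (rule has_sum_add[OF has_sum_cmult_left[OF assms(1)] has_sum_cmult_right[OF mean_Re]])
qed

lemma prob_mean_defect_le:
  fixes \<mu> :: "'a \<Rightarrow> real" and f :: "'a \<Rightarrow> complex"
  assumes "is_prob \<mu>" and "((\<lambda>s. complex_of_real (\<mu> s) * f s) has_sum w) UNIV"
    and "\<And>s. (cmod (f s))\<^sup>2 \<le> M"
  shows "\<mu> s * (cmod (f s - w))\<^sup>2 \<le> M - (cmod w)\<^sup>2"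
    and "\<mu> s * (M - (cmod (f s))\<^sup>2) \<le> M - (cmod w)\<^sup>2"
proof -
  have nonneg: "\<And>s. \<mu> s \<ge> 0" and total: "(\<mu> has_sum 1) UNIV"
    using assms(1) by (auto simp: is_prob_def)
  have "\<mu> s * ((cmod (f s - w))\<^sup>2 + (M - (cmod (f s))\<^sup>2)) \<le> M - (cmod w)\<^sup>2"
    using finite_sum_le_has_sum[OF has_sum_mean_defect[OF total assms(2)], of "{s}"]
      nonneg assms(3) by simp
  moreover have "\<mu> s * (cmod (f s - w))\<^sup>2 \<ge> 0" and "\<mu> s * (M - (cmod (f s))\<^sup>2) \<ge> 0"
    using nonneg[of s] assms(3)[of s] by simp_all
  ultimately show "\<mu> s * (cmod (f s - w))\<^sup>2 \<le> M - (cmod w)\<^sup>2"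
    and "\<mu> s * (M - (cmod (f s))\<^sup>2) \<le> M - (cmod w)\<^sup>2"
    by (simp_all add: distrib_left)
qed

definition shift_approx :: "complex \<Rightarrow> ('g::plus \<Rightarrow> complex) \<Rightarrow> ('g \<Rightarrow> real) \<Rightarrow> nat \<Rightarrow> 'g \<Rightarrow> bool" where
  "shift_approx lam h D n a \<longleftrightarrow> (\<exists>K\<ge>0. \<forall>g.
     D (g + a) \<le> K * D g \<and> cmod (h (g + a) - lam ^ n * h g) \<le> K * sqrt (D g))"

lemma shift_approx_step:
  assumes "p > 0" and "\<And>g. D g \<ge> 0"
    and "\<And>g. p * (cmod (h (g + s) - lam * h g))\<^sup>2 \<le> D g"
    and "\<And>g. p * D (g + s) \<le> D g"
  shows "shift_approx lam h D 1 s"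
proof -
  define K where "K = 1 / p + 1 / sqrt p"
  have "D (g + s) \<le> K * D g \<and> cmod (h (g + s) - lam * h g) \<le> K * sqrt (D g)" for g
  proof
    have "D (g + s) \<le> D g / p"
      using assms(1,4) by (simp add: field_simps)
    also have "\<dots> \<le> K * D g"
      using assms(1,2) by (simp add: K_def field_simps)
    finally show "D (g + s) \<le> K * D g" .
    have "(cmod (h (g + s) - lam * h g))\<^sup>2 \<le> D g / p"
      using assms(1,3) by (simp add: field_simps)
    then have "cmod (h (g + s) - lam * h g) \<le> sqrt (D g / p)"
      by (rule real_le_rsqrt)
    also have "\<dots> = sqrt (D g) * (1 / sqrt p)"
      by (simp add: real_sqrt_divide)
    also have "\<dots> \<le> K * sqrt (D g)"
      using assms(1,2) by (simp add: K_def algebra_simps)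
    finally show "cmod (h (g + s) - lam * h g) \<le> K * sqrt (D g)" .
  qed
  moreover have "K \<ge> 0"
    using assms(1) by (simp add: K_def)
  ultimately show ?thesis
    unfolding shift_approx_def by auto
qed

lemma shift_approx_add:
  fixes h :: "'g::semigroup_add \<Rightarrow> complex"
  assumes "cmod lam = 1" and "\<And>g. D g \<ge> 0"
    and "shift_approx lam h D m a" and "shift_approx lam h D n b"
  shows "shift_approx lam h D (n + m) (a + b)"
proof -
  obtain K1 where "K1 \<ge> 0" and D1: "\<And>g. D (g + a) \<le> K1 * D g"
    and h1: "\<And>g. cmod (h (g + a) - lam ^ m * h g) \<le> K1 * sqrt (D g)"
    using assms(3) unfolding shift_approx_def by blast
  obtain K2 where "K2 \<ge> 0" and D2: "\<And>g. D (g + b) \<le> K2 * D g"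
    and h2: "\<And>g. cmod (h (g + b) - lam ^ n * h g) \<le> K2 * sqrt (D g)"
    using assms(4) unfolding shift_approx_def by blast
  define K where "K = K1 * K2 + K2 * sqrt K1 + K1"
  have "D (g + (a + b)) \<le> K * D g \<and> cmod (h (g + (a + b)) - lam ^ (n + m) * h g) \<le> K * sqrt (D g)" for g
  proof
    have "D (g + (a + b)) \<le> K2 * D (g + a)"
      using D2[of "g + a"] by (simp add: add.assoc)
    also have "\<dots> \<le> K2 * (K1 * D g)"
      using D1 \<open>K2 \<ge> 0\<close> by (rule mult_left_mono)
    also have "\<dots> \<le> K * D g"
      using \<open>K1 \<ge> 0\<close> \<open>K2 \<ge> 0\<close> assms(2)[of g] by (simp add: K_def algebra_simps)
    finally show "D (g + (a + b)) \<le> K * D g" .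
    have "h (g + (a + b)) - lam ^ (n + m) * h g
        = (h ((g + a) + b) - lam ^ n * h (g + a)) + lam ^ n * (h (g + a) - lam ^ m * h g)"
      by (simp add: add.assoc power_add algebra_simps)
    then have "cmod (h (g + (a + b)) - lam ^ (n + m) * h g)
        \<le> cmod (h ((g + a) + b) - lam ^ n * h (g + a)) + cmod (lam ^ n * (h (g + a) - lam ^ m * h g))"
      by (metis norm_triangle_ineq)
    also have "\<dots> = cmod (h ((g + a) + b) - lam ^ n * h (g + a)) + cmod (h (g + a) - lam ^ m * h g)"
      using assms(1) by (simp add: norm_mult norm_power)
    also have "\<dots> \<le> K2 * sqrt (D (g + a)) + K1 * sqrt (D g)"
      by (rule add_mono[OF h2 h1])
    also have "\<dots> \<le> K2 * (sqrt K1 * sqrt (D g)) + K1 * sqrt (D g)"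
      using D1[of g] \<open>K1 \<ge> 0\<close> \<open>K2 \<ge> 0\<close>
      by (intro add_mono mult_left_mono) (auto simp flip: real_sqrt_mult)
    also have "\<dots> \<le> K * sqrt (D g)"
      using \<open>K1 \<ge> 0\<close> \<open>K2 \<ge> 0\<close> assms(2)[of g] by (simp add: K_def algebra_simps)
    finally show "cmod (h (g + (a + b)) - lam ^ (n + m) * h g) \<le> K * sqrt (D g)" .
  qed
  moreover have "K \<ge> 0"
    using \<open>K1 \<ge> 0\<close> \<open>K2 \<ge> 0\<close> by (simp add: K_def)
  ultimately show ?thesis
    unfolding shift_approx_def by auto
qed

lemma shift_approx_sgrp_gen:
  fixes h :: "'g::semigroup_add \<Rightarrow> complex" and \<mu> :: "'g \<Rightarrow> real"
  assumes "cmod lam = 1" and "\<And>g. D g \<ge> 0"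
    and "\<And>g s. \<mu> s * (cmod (h (g + s) - lam * h g))\<^sup>2 \<le> D g"
    and "\<And>g s. \<mu> s * D (g + s) \<le> D g"
    and "a \<in> sgrp_gen {s. \<mu> s > 0}"
  shows "\<exists>n>0. shift_approx lam h D n a"
  using assms(5)
proof induction
  case (base s)
  then have "shift_approx lam h D 1 s"
    by (intro shift_approx_step[where p = "\<mu> s"] assms(2-4)) simp
  then show ?case by blast
next
  case (add a b)
  then obtain m n where "m > 0" "shift_approx lam h D m a" "n > 0" "shift_approx lam h D n b"
    by blast
  then show ?case
    using shift_approx_add[OF assms(1,2)] by (intro exI[of _ "n + m"]) simp
qed

lemma nonpos_if_le_SUP_defect:
  fixes \<phi> :: "'a \<Rightarrow> real"
  assumes "bdd_above (range \<phi>)" and "\<phi> a > 0" and "K \<ge> 0"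
    and "\<And>g. c * \<phi> g \<le> K * ((SUP g. \<phi> g) - \<phi> g)"
  shows "c \<le> 0"
proof (rule ccontr)
  assume "\<not> c \<le> 0"
  define M where "M = (SUP g. \<phi> g)"
  have "M \<ge> \<phi> a"
    unfolding M_def by (rule cSUP_upper[OF UNIV_I assms(1)])
  have "\<phi> g \<le> K * M / (c + K)" for g
    using assms(3) assms(4)[of g] \<open>\<not> c \<le> 0\<close> by (simp add: M_def field_simps)
  then have "M \<le> K * M / (c + K)"
    unfolding M_def by (intro cSUP_least) auto
  then have "c * M \<le> 0"
    using assms(3) \<open>\<not> c \<le> 0\<close> by (simp add: field_simps)
  then show False
    using \<open>M \<ge> \<phi> a\<close> assms(2) \<open>\<not> c \<le> 0\<close> by (simp add: mult_le_0_iff)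
qed

lemma root_of_unity_if_bounded_eigenfunction:
  fixes \<mu> :: "'g::monoid_add \<Rightarrow> real" and h :: "'g \<Rightarrow> complex"
  assumes "is_prob \<mu>" and "sgrp_gen {s. \<mu> s > 0} = UNIV" and "cmod lam = 1"
    and "\<And>g. cmod (h g) \<le> C" and "h a \<noteq> 0"
    and "\<And>g. ((\<lambda>s. complex_of_real (\<mu> s) * h (g + s)) has_sum lam * h g) UNIV"
  shows "\<exists>k::nat. k > 0 \<and> lam ^ k = 1"
proof -
  define M where "M = (SUP g. (cmod (h g))\<^sup>2)"
  have bdd: "bdd_above (range (\<lambda>g. (cmod (h g))\<^sup>2))"
    using assms(4) by (intro bdd_aboveI2[of _ _ "C\<^sup>2"]) (simp add: power_mono)
  have le_M: "(cmod (h g))\<^sup>2 \<le> M" for g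
    unfolding M_def by (rule cSUP_upper[OF UNIV_I bdd])
  define D where "D g = M - (cmod (h g))\<^sup>2" for g
  have D_nonneg: "D g \<ge> 0" for g
    using le_M[of g] by (simp add: D_def)
  have step_h: "\<mu> s * (cmod (h (g + s) - lam * h g))\<^sup>2 \<le> D g"
    and step_D: "\<mu> s * D (g + s) \<le> D g" for g s
    using prob_mean_defect_le[OF assms(1,6) le_M, of s] assms(3)
    by (simp_all add: D_def norm_mult add.assoc)
  obtain n where "n > 0" and "shift_approx lam h D n 0"
    using shift_approx_sgrp_gen[OF assms(3) D_nonneg step_h step_D, of 0] assms(2) by auto
  then obtain K where "K \<ge> 0" and approx: "\<And>g. cmod (h g - lam ^ n * h g) \<le> K * sqrt (D g)"
    unfolding shift_approx_def by auto
  have "(cmod (1 - lam ^ n))\<^sup>2 * (cmod (h g))\<^sup>2 \<le> K\<^sup>2 * (M - (cmod (h g))\<^sup>2)" for g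
  proof -
    have "cmod (1 - lam ^ n) * cmod (h g) \<le> K * sqrt (D g)"
      using approx[of g] by (simp add: norm_mult algebra_simps flip: norm_mult)
    then have "(cmod (1 - lam ^ n) * cmod (h g))\<^sup>2 \<le> (K * sqrt (D g))\<^sup>2"
      by (simp add: power_mono)
    then show ?thesis
      using le_M[of g] by (simp add: D_def power_mult_distrib)
  qed
  then have "(cmod (1 - lam ^ n))\<^sup>2 \<le> 0"
    using bdd assms(5) by (intro nonpos_if_le_SUP_defect[of _ a "K\<^sup>2"]) (auto simp: M_def)
  then show ?thesis
    using \<open>n > 0\<close> by auto
qed

theorem corollary2p4:
  fixes \<mu> :: "'g::{group_add, countable} \<Rightarrow> real"
    and t :: "'g \<Rightarrow> 'g \<Rightarrow> complex"
    and lam :: complex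
  assumes "is_prob \<mu>"
    and "sgrp_gen {g. \<mu> g > 0} = UNIV"
    and "cmod lam = 1"
    and "bounded_kernel t"
    and "t \<noteq> (\<lambda>_ _. 0)"
    and "markov_op \<mu> t = (\<lambda>x y. lam * t x y)"
  shows "\<exists>k::nat. k > 0 \<and> lam ^ k = 1"
proof -
  obtain x0 y0 where "t x0 y0 \<noteq> 0"
    using assms(5) by blast
  obtain C where "\<And>x y. cmod (t x y) \<le> C"
    using bounded_kernel_entry_bound[OF assms(4)] by blast
  show ?thesis
  proof (rule root_of_unity_if_bounded_eigenfunction[OF assms(1-3),
        where h = "\<lambda>g. t (x0 + g) (y0 + g)"])
    show "cmod (t (x0 + g) (y0 + g)) \<le> C" for g
      by fact
    show "t (x0 + 0) (y0 + 0) \<noteq> 0"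
      using \<open>t x0 y0 \<noteq> 0\<close> by simp
    show "((\<lambda>s. complex_of_real (\<mu> s) * t (x0 + (g + s)) (y0 + (g + s)))
        has_sum lam * t (x0 + g) (y0 + g)) UNIV" for g
      using markov_op_eigen_has_sum[OF assms(1,4,6), of "x0 + g" "y0 + g"] by (simp add: add.assoc)
  qed
qed

end
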